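(* For every integer $n\ge 1$ there is a self-constructing set of cardinality exactly $n$. Moreover, there is a self-constructing set which is creative (in particular, not computable).
   Context: $\omega$ denotes the set of natural numbers $\{0,1,2,\dots\}$. $\langle \psi_e : e\in\omega\rangle$ is a standard (acceptable, in the sense of Rogers) computable numbering of all partial computable functions from $\omega$ to $\omega$, and $W_e$ denotes the domain of $\psi_e$. A nonempty computably enumerable set $A\subseteq\omega$ is called self-constructing if $W_e=A$ for every $e\in A$. A computably enumerable set $C$ is creative if its complement is productive, i.e. there is a partial computable $p$ such that whenever $W_x\subseteq\omega\setminus C$, $p(x)$ is defined and $p(x)\in(\omega\setminus C)\setminus W_x$. *)

theory Defs
  imports Main
begin

datatype recf = Z | S | Proj nat | Cn recf "recf list" | Pr recf recf | Mn recf

inductive eval :: "recf \<Rightarrow> nat list \<Rightarrow> nat \<Rightarrow> bool" where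
  eval_Z: "eval Z xs 0"
| eval_S: "eval S (x # xs) (Suc x)"
| eval_Proj: "i < length xs \<Longrightarrow> eval (Proj i) xs (xs ! i)"
| eval_Cn: "list_all2 (\<lambda>g y. eval g xs y) gs ys \<Longrightarrow> eval f ys z \<Longrightarrow> eval (Cn f gs) xs z"
| eval_Pr0: "eval f xs y \<Longrightarrow> eval (Pr f g) (0 # xs) y"
| eval_PrS: "eval (Pr f g) (n # xs) y \<Longrightarrow> eval g (n # y # xs) z
             \<Longrightarrow> eval (Pr f g) (Suc n # xs) z"
| eval_Mn: "eval f (n # xs) 0 \<Longrightarrow> (\<forall>m<n. \<exists>y. eval f (m # xs) y \<and> y \<noteq> 0)
             \<Longrightarrow> eval (Mn f) xs n"

definition partial_computable :: "(nat \<Rightarrow> nat option) \<Rightarrow> bool" where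
  "partial_computable f \<longleftrightarrow> (\<exists>r. \<forall>x y. eval r [x] y \<longleftrightarrow> f x = Some y)"

definition partial_computable2 :: "(nat \<Rightarrow> nat \<Rightarrow> nat option) \<Rightarrow> bool" where
  "partial_computable2 g \<longleftrightarrow> (\<exists>r. \<forall>e x y. eval r [e, x] y \<longleftrightarrow> g e x = Some y)"

definition total_computable :: "(nat \<Rightarrow> nat) \<Rightarrow> bool" where
  "total_computable t \<longleftrightarrow> partial_computable (\<lambda>x. Some (t x))"

definition computable_numbering :: "(nat \<Rightarrow> nat \<Rightarrow> nat option) \<Rightarrow> bool" where
  "computable_numbering \<phi> \<longleftrightarrow>
     partial_computable2 \<phi> \<and> (\<forall>f. partial_computable f \<longrightarrow> (\<exists>e. \<phi> e = f))"

definition acceptable :: "(nat \<Rightarrow> nat \<Rightarrow> nat option) \<Rightarrow> bool" where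
  "acceptable \<psi> \<longleftrightarrow> computable_numbering \<psi> \<and>
     (\<forall>\<phi>. partial_computable2 \<phi> \<longrightarrow>
         (\<exists>t. total_computable t \<and> (\<forall>e. \<phi> e = \<psi> (t e))))"

definition W :: "(nat \<Rightarrow> nat \<Rightarrow> nat option) \<Rightarrow> nat \<Rightarrow> nat set" where
  "W \<psi> e = dom (\<psi> e)"

definition ce :: "nat set \<Rightarrow> bool" where
  "ce A \<longleftrightarrow> (\<exists>f. partial_computable f \<and> A = dom f)"

definition computable_set :: "nat set \<Rightarrow> bool" where
  "computable_set A \<longleftrightarrow> total_computable (\<lambda>x. if x \<in> A then 1 else 0)"

definition self_constructing :: "(nat \<Rightarrow> nat \<Rightarrow> nat option) \<Rightarrow> nat set \<Rightarrow> bool" where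
  "self_constructing \<psi> A \<longleftrightarrow> A \<noteq> {} \<and> ce A \<and> (\<forall>e\<in>A. W \<psi> e = A)"

definition productive :: "(nat \<Rightarrow> nat \<Rightarrow> nat option) \<Rightarrow> nat set \<Rightarrow> bool" where
  "productive \<psi> P \<longleftrightarrow> (\<exists>p. partial_computable p \<and>
      (\<forall>x. W \<psi> x \<subseteq> P \<longrightarrow> (\<exists>y. p x = Some y \<and> y \<in> P - W \<psi> x)))"

definition creative :: "(nat \<Rightarrow> nat \<Rightarrow> nat option) \<Rightarrow> nat set \<Rightarrow> bool" where
  "creative \<psi> C \<longleftrightarrow> ce C \<and> productive \<psi> (- C)"

end

theory Submission
  imports Defs
begin

(* Everything rests on one construction (lemma self_constructing_from_ce): for every c.e. set B
   there is an injective sequence a, computable from an index u0 (psi u0 j = a j), such that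
   psi (a j) is the constant function j on the set  A = {a 0} \<union> {a (z+1) | z \<in> B}  and undefined
   outside it.  Then W (a j) = A for every j and A \<subseteq> range a, so A is self-constructing.
   - B = {0, ..., n-2} gives a self-constructing set with exactly n elements;
   - B = K, the halting set {e. e \<in> W e}, gives a creative A: if W x \<subseteq> -A, then an index h x
     with psi (h x) y = psi x (a (y+1)) lies outside K, so a (h x + 1) \<in> -A - W x.
   The sequence is a j = s^j (t u0), where s adds one to every output and psi (t u) semi-decides
   the set of x that equal psi u 0 or certify themselves as a_z (psi x (psi u 0) = z, z-1 \<in> B,
   psi u z = x); the fixed point u0 comes from Kleene's recursion theorem. *)

lemma eval_Z_iff [simp]: "eval Z xs y \<longleftrightarrow> y = 0"
  by (auto elim: eval.cases intro: eval.intros)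

lemma eval_S_iff [simp]: "eval S (x # xs) y \<longleftrightarrow> y = Suc x"
  by (auto elim: eval.cases intro: eval.intros)

lemma eval_Proj_iff [simp]: "eval (Proj i) xs y \<longleftrightarrow> i < length xs \<and> y = xs ! i"
  by (auto elim: eval.cases intro: eval.intros)

lemma eval_Cn_iff [simp]:
  "eval (Cn f gs) xs z \<longleftrightarrow> (\<exists>ys. list_all2 (\<lambda>g y. eval g xs y) gs ys \<and> eval f ys z)"
  by (auto elim: eval.cases intro: eval.intros)

text \<open>The next two rules let the simplifier unfold compositions of any fixed arity into one
  existential per argument term; the second one covers outer functions such as Z whose
  value does not depend on their arguments.\<close>
lemma ex_list_all2_Cons [simp]:
  "(\<exists>ys. list_all2 P (x # xs) ys \<and> Q ys) \<longleftrightarrow> (\<exists>y. P x y \<and> (\<exists>ys. list_all2 P xs ys \<and> Q (y # ys)))"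
  by (auto simp: list_all2_Cons1)

lemma Ex_list_all2_Cons [simp]:
  "Ex (list_all2 P (x # xs)) \<longleftrightarrow> (\<exists>y. P x y) \<and> Ex (list_all2 P xs)"
  by (auto simp: list_all2_Cons1)

lemma eval_Pr0_iff [simp]: "eval (Pr f g) (0 # xs) y \<longleftrightarrow> eval f xs y"
  by (auto elim: eval.cases intro: eval.intros)

lemma eval_PrS_iff [simp]:
  "eval (Pr f g) (Suc n # xs) z \<longleftrightarrow> (\<exists>y. eval (Pr f g) (n # xs) y \<and> eval g (n # y # xs) z)"
  by (auto elim: eval.cases intro: eval.intros)

lemma eval_Mn_iff:
  "eval (Mn f) xs n \<longleftrightarrow> eval f (n # xs) 0 \<and> (\<forall>m<n. \<exists>y. eval f (m # xs) y \<and> y \<noteq> 0)"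
  by (auto elim: eval.cases intro: eval.intros)

lemma eval_det: "eval r xs y \<Longrightarrow> eval r xs y' \<Longrightarrow> y = y'"
proof (induction r arbitrary: xs y y')
  case (Cn f gs)
  from Cn.prems obtain ys ys' where
    a: "list_all2 (\<lambda>g y. eval g xs y) gs ys" "eval f ys y" and
    b: "list_all2 (\<lambda>g y. eval g xs y) gs ys'" "eval f ys' y'"
    by auto
  have "ys = ys'" using a(1) b(1) Cn.IH(2)
  proof (induction gs arbitrary: ys ys')
    case (Cons g gs)
    from Cons.prems obtain z zs z' zs' where
      "ys = z # zs" "ys' = z' # zs'" "eval g xs z" "eval g xs z'"
      "list_all2 (\<lambda>g y. eval g xs y) gs zs" "list_all2 (\<lambda>g y. eval g xs y) gs zs'"
      by (auto simp: list_all2_Cons1)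
    moreover have "z = z'" using calculation Cons.prems(3) by auto
    moreover have "zs = zs'" using calculation Cons.prems(3) by (intro Cons.IH) auto
    ultimately show ?case by simp
  qed simp
  with a b Cn.IH(1) show ?case by blast
next
  case (Pr f g)
  from Pr.prems show ?case
  proof (induction xs arbitrary: y y')
    case (Cons n xs)
    then show ?case
      by (induction n arbitrary: y y') (use Pr.IH in \<open>simp, metis eval_PrS_iff\<close>)
  qed (auto elim: eval.cases)
next
  case (Mn f)
  from Mn.prems show ?case unfolding eval_Mn_iff
    by (metis Mn.IH linorder_neqE_nat)
qed (auto elim: eval.cases)

definition ADD :: recf where "ADD = Pr (Proj 0) (Cn S [Proj 1])"

lemma eval_ADD [simp]: "eval ADD [a, b] y \<longleftrightarrow> y = a + b"
  unfolding ADD_def by (induction a arbitrary: y) auto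

definition PRED :: recf where "PRED = Pr Z (Proj 0)"

lemma eval_PRED [simp]: "eval PRED [n] y \<longleftrightarrow> y = n - 1"
  unfolding PRED_def by (induction n arbitrary: y) auto

text \<open>Truncated subtraction; the recursion runs on the subtrahend, hence the argument swap.\<close>
definition SUB :: recf where "SUB = Cn (Pr (Proj 0) (Cn PRED [Proj 1])) [Proj 1, Proj 0]"

lemma eval_SUB [simp]: "eval SUB [a, b] y \<longleftrightarrow> y = a - b"
proof -
  have "eval (Pr (Proj 0) (Cn PRED [Proj 1])) [b, a] y \<longleftrightarrow> y = a - b" for y
    by (induction b arbitrary: y) auto
  then show ?thesis unfolding SUB_def by auto
qed

fun cst :: "nat \<Rightarrow> recf" where
  "cst 0 = Z"
| "cst (Suc n) = Cn S [cst n]"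

lemma eval_cst [simp]: "eval (cst n) xs y \<longleftrightarrow> y = n"
  by (induction n arbitrary: y) auto

text \<open>The distance |a - b| of the values of two terms; it is 0 exactly when they agree.\<close>
definition DIST :: "recf \<Rightarrow> recf \<Rightarrow> recf" where
  "DIST g h = Cn ADD [Cn SUB [g, h], Cn SUB [h, g]]"

lemma eval_DIST [simp]:
  "eval (DIST g h) xs y \<longleftrightarrow> (\<exists>a b. eval g xs a \<and> eval h xs b \<and> y = (a - b) + (b - a))"
  unfolding DIST_def by auto (metis eval_det)

text \<open>Searching a zero of a function that ignores the search variable halts (at 0)
  exactly when that function's value is 0: this turns a test into a semi-decision.\<close>
lemma eval_Mn_constant:
  assumes "\<And>n y. eval V (n # L) y \<longleftrightarrow> R y"
  shows "eval (Mn V) L k \<longleftrightarrow> k = 0 \<and> R 0"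
proof
  assume "eval (Mn V) L k"
  then have zero: "eval V (k # L) 0" and below: "\<forall>m<k. \<exists>y. eval V (m # L) y \<and> y \<noteq> 0"
    by (auto simp: eval_Mn_iff)
  from zero have "R 0" using assms by simp
  moreover have "k = 0"
  proof (rule ccontr)
    assume "k \<noteq> 0"
    then obtain y where "eval V (0 # L) y" "y \<noteq> 0" using below by auto
    moreover have "eval V (0 # L) 0" using \<open>R 0\<close> assms by simp
    ultimately show False using eval_det by blast
  qed
  ultimately show "k = 0 \<and> R 0" by simp
next
  assume "k = 0 \<and> R 0"
  then show "eval (Mn V) L k" using assms by (simp add: eval_Mn_iff)
qed

text \<open>Primitive recursion from Z never evaluates the step at argument 0, so it realises the
  semi-decision of the disjunction "d = 0 or P", where G semi-decides P.\<close>
lemma eval_Pr_guard: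
  assumes "\<And>m p k. eval G (m # p # L) k \<longleftrightarrow> k = 0 \<and> P"
  shows "eval (Pr Z G) (d # L) y \<longleftrightarrow> y = 0 \<and> (d = 0 \<or> P)"
  by (induction d arbitrary: y) (auto simp: assms)

section \<open>Consequences of acceptability\<close>

context
  fixes \<psi> :: "nat \<Rightarrow> nat \<Rightarrow> nat option"
  assumes acc: "acceptable \<psi>"
begin

lemma acceptable_universal:
  obtains rU where "\<And>e x y. eval rU [e, x] y \<longleftrightarrow> \<psi> e x = Some y"
  using acc unfolding acceptable_def computable_numbering_def partial_computable2_def by blast

lemma acceptable_smn:
  assumes "\<And>e x y. eval r [e, x] y \<longleftrightarrow> \<phi> e x = Some y"
  shows "\<exists>t rt. (\<forall>x y. eval rt [x] y \<longleftrightarrow> y = t x) \<and> (\<forall>e. \<psi> (t e) = \<phi> e)"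
proof -
  have "partial_computable2 \<phi>" unfolding partial_computable2_def using assms by blast
  then obtain t where "total_computable t" "\<forall>e. \<phi> e = \<psi> (t e)"
    using acc unfolding acceptable_def by blast
  then show ?thesis unfolding total_computable_def partial_computable_def by force
qed

lemma acceptable_index:
  assumes "\<And>x y. eval r [x] y \<longleftrightarrow> f x = Some y"
  shows "\<exists>e. \<psi> e = f"
  using acc assms unfolding acceptable_def computable_numbering_def partial_computable_def by blast

lemma partial_computable_psi: "partial_computable (\<psi> e)"
proof -
  obtain rU where U: "\<And>e x y. eval rU [e, x] y \<longleftrightarrow> \<psi> e x = Some y"
    using acceptable_universal by blast
  have "eval (Cn rU [cst e, Proj 0]) [x] y \<longleftrightarrow> \<psi> e x = Some y" for x y
    by (auto simp: U)
  then show ?thesis unfolding partial_computable_def by blast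
qed

text \<open>The diagonal family \<phi> u = \<psi> (\<psi> u u) is indexed by some computable t, and u = t v for an
  index v of f \<circ> t is the fixed point.\<close>
theorem recursion_theorem:
  assumes rf: "\<And>x y. eval rf [x] y \<longleftrightarrow> y = f x"
  shows "\<exists>n. \<psi> (f n) = \<psi> n"
proof -
  obtain rU where U: "\<And>e x y. eval rU [e, x] y \<longleftrightarrow> \<psi> e x = Some y"
    using acceptable_universal by blast
  define \<phi> where "\<phi> = (\<lambda>u x. case \<psi> u u of Some v \<Rightarrow> \<psi> v x | None \<Rightarrow> None)"
  have diagonal: "eval (Cn rU [Cn rU [Proj 0, Proj 0], Proj 1]) [e, x] y \<longleftrightarrow> \<phi> e x = Some y"
    for e x y by (cases "\<psi> e e") (auto simp: U \<phi>_def)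
  obtain rt t where rt: "\<And>x y. eval rt [x] y \<longleftrightarrow> y = t x" and t: "\<And>e. \<psi> (t e) = \<phi> e"
    using acceptable_smn[OF diagonal] by blast
  have "eval (Cn rf [Cn rt [Proj 0]]) [x] y \<longleftrightarrow> Some (f (t x)) = Some y" for x y
    by (auto simp: rf rt)
  from acceptable_index[OF this] obtain v where v: "\<psi> v = (\<lambda>u. Some (f (t u)))" by blast
  have "\<psi> (t v) = \<psi> (f (t v))" using t[of v] v unfolding \<phi>_def by simp
  then show ?thesis by metis
qed

text \<open>Here a j = s^j (t u), where \<psi> (s v) adds one to the outputs of \<psi> v and
  \<psi> (t u) = g u; the index u0 is a fixed point of u \<mapsto> (an index of j \<mapsto> s^j (t u)).\<close>
lemma shifted_copies_fixed_point:
  assumes rg: "\<And>u x y. eval rg [u, x] y \<longleftrightarrow> g u x = Some y"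
  shows "\<exists>u0 a. (\<forall>j. \<psi> u0 j = Some (a j)) \<and> (\<forall>j x. \<psi> (a j) x = map_option (\<lambda>v. v + j) (g u0 x))"
proof -
  obtain rU where U: "\<And>e x y. eval rU [e, x] y \<longleftrightarrow> \<psi> e x = Some y"
    using acceptable_universal by blast
  have shift: "eval (Cn S [Cn rU [Proj 0, Proj 1]]) [v, x] y \<longleftrightarrow> map_option Suc (\<psi> v x) = Some y"
    for v x y by (auto simp: U)
  obtain s rs where rs: "\<forall>x y. eval rs [x] y \<longleftrightarrow> y = s x"
    and s: "\<forall>v. \<psi> (s v) = (\<lambda>x. map_option Suc (\<psi> v x))"
    using acceptable_smn[OF shift] by blast
  obtain t rt where rt: "\<forall>x y. eval rt [x] y \<longleftrightarrow> y = t x" and t: "\<forall>u. \<psi> (t u) = g u"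
    using acceptable_smn[OF rg] by blast
  define iter where "iter = Pr (Cn rt [Proj 0]) (Cn rs [Proj 1])"
  have iter: "eval iter [j, u] y \<longleftrightarrow> y = (s ^^ j) (t u)" for j u y
    unfolding iter_def by (induction j arbitrary: y) (auto simp: rt rs)
  have iter_swapped: "eval (Cn iter [Proj 1, Proj 0]) [u, j] y \<longleftrightarrow> Some ((s ^^ j) (t u)) = Some y"
    for u j y by (auto simp: iter)
  obtain f rf where rf: "\<forall>x y. eval rf [x] y \<longleftrightarrow> y = f x"
    and f: "\<forall>u. \<psi> (f u) = (\<lambda>j. Some ((s ^^ j) (t u)))"
    using acceptable_smn[OF iter_swapped] by blast
  obtain u0 where u0: "\<psi> (f u0) = \<psi> u0" using recursion_theorem rf by blast
  define a where "a j = (s ^^ j) (t u0)" for j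
  have "\<psi> u0 j = Some (a j)" for j using u0 f a_def by metis
  moreover have "\<psi> (a j) x = map_option (\<lambda>v. v + j) (g u0 x)" for j x
  proof (induction j)
    case 0
    then show ?case by (simp add: a_def t option.map_ident)
  next
    case (Suc j)
    have "\<psi> (a (Suc j)) x = map_option Suc (\<psi> (a j) x)" by (simp add: a_def s)
    then show ?case using Suc by (simp add: option.map_comp comp_def)
  qed
  ultimately show ?thesis by blast
qed

end

section \<open>The construction\<close>

text \<open>If u indexes a sequence a (\<psi> u j = a j), the target set of u consists of a 0 and of every
  x that certifies itself as a member a z with z - 1 \<in> B, by computing \<psi> x (a 0) = z.\<close>
definition target :: "(nat \<Rightarrow> nat \<Rightarrow> nat option) \<Rightarrow> nat set \<Rightarrow> nat \<Rightarrow> nat set" where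
  "target \<psi> B u = {x. \<exists>c. \<psi> u 0 = Some c \<and>
     (x = c \<or> (\<exists>z. \<psi> x c = Some z \<and> 1 \<le> z \<and> z - 1 \<in> B \<and> \<psi> u z = Some x))}"

text \<open>The claim test on [z, u, x] checks the claim "x = a z with
  z - 1 \<in> B": its value is (1 - z) + |\<psi> u z - x|, defined exactly when \<psi> u z and
  rq (z - 1) are.\<close>
definition claim_test :: "recf \<Rightarrow> recf \<Rightarrow> recf" where
  "claim_test rU rq = Cn ADD
     [Cn ADD [Cn SUB [cst 1, Proj 0], DIST (Cn rU [Proj 1, Proj 0]) (Proj 2)],
      Cn Z [Cn rq [Cn PRED [Proj 0]]]]"

text \<open>The certificate test: the claim test applied to z = \<psi> x (\<psi> u 0); arguments [u, x].\<close>
definition cert_test :: "recf \<Rightarrow> recf \<Rightarrow> recf" where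
  "cert_test rU rq = Cn (claim_test rU rq) [Cn rU [Proj 1, Cn rU [Proj 0, Z]], Proj 0, Proj 1]"

definition cert_search :: "recf \<Rightarrow> recf \<Rightarrow> recf" where
  "cert_search rU rq = Mn (Cn (cert_test rU rq) [Proj 1, Proj 2])"

text \<open>Halts on [u, x] iff x = \<psi> u 0 or x is certified, using the guard on d = |x - \<psi> u 0|.\<close>
definition target_semidecider :: "recf \<Rightarrow> recf \<Rightarrow> recf" where
  "target_semidecider rU rq = Cn (Pr Z (Cn (cert_search rU rq) [Proj 2, Proj 3]))
     [DIST (Proj 1) (Cn rU [Proj 0, Z]), Proj 0, Proj 1]"

context
  fixes \<psi> :: "nat \<Rightarrow> nat \<Rightarrow> nat option" and rU rq :: recf and q :: "nat \<Rightarrow> nat option"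
  assumes U: "\<And>e x y. eval rU [e, x] y \<longleftrightarrow> \<psi> e x = Some y"
    and Q: "\<And>y v. eval rq [y] v \<longleftrightarrow> q y = Some v"
begin

lemma eval_cert_test:
  "eval (cert_test rU rq) [u, x] y \<longleftrightarrow> (\<exists>c z w v. \<psi> u 0 = Some c \<and> \<psi> x c = Some z \<and>
     \<psi> u z = Some w \<and> q (z - 1) = Some v \<and> y = (1 - z) + ((w - x) + (x - w)))"
  unfolding cert_test_def claim_test_def by (auto simp: U Q)

lemma eval_cert_search:
  "eval (cert_search rU rq) [u, x] k \<longleftrightarrow>
     k = 0 \<and> (\<exists>c z. \<psi> u 0 = Some c \<and> \<psi> x c = Some z \<and> 1 \<le> z \<and> q (z - 1) \<noteq> None \<and> \<psi> u z = Some x)"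
proof -
  have "eval (cert_search rU rq) [u, x] k \<longleftrightarrow> k = 0 \<and>
      (\<exists>c z w v. \<psi> u 0 = Some c \<and> \<psi> x c = Some z \<and> \<psi> u z = Some w \<and> q (z - 1) = Some v \<and>
        0 = (1 - z) + ((w - x) + (x - w)))"
    unfolding cert_search_def by (rule eval_Mn_constant) (simp add: eval_cert_test)
  then show ?thesis by (auto simp: not_less_eq_eq)
qed

lemma eval_target_semidecider:
  "eval (target_semidecider rU rq) [u, x] y \<longleftrightarrow> y = 0 \<and> x \<in> target \<psi> (dom q) u"
proof -
  have "eval (Pr Z (Cn (cert_search rU rq) [Proj 2, Proj 3])) [d, u, x] y
      \<longleftrightarrow> y = 0 \<and> (d = 0 \<or> (\<exists>c z. \<psi> u 0 = Some c \<and> \<psi> x c = Some z \<and> 1 \<le> z \<and>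
        q (z - 1) \<noteq> None \<and> \<psi> u z = Some x))" for d y
    by (rule eval_Pr_guard) (simp add: eval_cert_search)
  then show ?thesis unfolding target_semidecider_def target_def by (auto simp: U)
qed

end

text \<open>If u0 indexes a sequence a whose members semi-decide the target set of u0 with output j,
  then a is injective (a j alone outputs j on a 0) and the target set is {a 0} \<union> a ` Suc ` B.\<close>
lemma target_of_fixed_point:
  assumes seq: "\<And>j. \<psi> u0 j = Some (a j)"
    and members: "\<And>j x. \<psi> (a j) x = (if x \<in> target \<psi> B u0 then Some j else None)"
  shows "inj a" and "target \<psi> B u0 = insert (a 0) (a ` Suc ` B)"
proof -
  have target_iff: "x \<in> target \<psi> B u0 \<longleftrightarrow>
      x = a 0 \<or> (\<exists>z. \<psi> x (a 0) = Some z \<and> 1 \<le> z \<and> z - 1 \<in> B \<and> a z = x)" for x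
    unfolding target_def by (auto simp: seq)
  then have a0: "a 0 \<in> target \<psi> B u0" by simp
  show "inj a"
  proof (rule injI)
    fix i j
    assume "a i = a j"
    then have "\<psi> (a i) (a 0) = \<psi> (a j) (a 0)" by simp
    then show "i = j" using a0 by (simp add: members)
  qed
  show "target \<psi> B u0 = insert (a 0) (a ` Suc ` B)"
  proof (intro equalityI subsetI)
    fix x
    assume x: "x \<in> target \<psi> B u0"
    show "x \<in> insert (a 0) (a ` Suc ` B)"
    proof (cases "x = a 0")
      case False
      then obtain z where "1 \<le> z" "z - 1 \<in> B" "a z = x"
        using x target_iff[of x] by auto
      then have "x = a (Suc (z - 1))" by simp
      with \<open>z - 1 \<in> B\<close> show ?thesis by blast
    qed simp
  next
    fix x
    assume "x \<in> insert (a 0) (a ` Suc ` B)"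
    then consider "x = a 0" | z where "z \<in> B" "x = a (Suc z)" by blast
    then show "x \<in> target \<psi> B u0"
    proof cases
      case 2
      then have "\<psi> x (a 0) = Some (Suc z)" using a0 by (simp add: members)
      with 2 show ?thesis using target_iff[of x] by auto
    qed (simp add: a0)
  qed
qed

lemma self_constructing_if_uniform_indices:
  assumes acc: "acceptable \<psi>"
    and members: "\<And>j. \<psi> (a j) = (\<lambda>x. if x \<in> A then Some j else None)"
    and "a 0 \<in> A" and "A \<subseteq> range a"
  shows "self_constructing \<psi> A"
proof -
  have "W \<psi> (a j) = A" for j by (auto simp: W_def members split: if_splits)
  moreover have "ce A"
    unfolding ce_def using partial_computable_psi[OF acc, of "a 0"] \<open>W \<psi> (a 0) = A\<close>
    by (auto simp: W_def)
  ultimately show ?thesis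
    unfolding self_constructing_def using assms(3,4) by blast
qed

theorem self_constructing_from_ce:
  assumes acc: "acceptable \<psi>" and "ce B"
  shows "\<exists>u0 a. (\<forall>j. \<psi> u0 j = Some (a j)) \<and> inj a \<and>
           self_constructing \<psi> (insert (a 0) (a ` Suc ` B))"
proof -
  obtain rU where U: "\<And>e x y. eval rU [e, x] y \<longleftrightarrow> \<psi> e x = Some y"
    using acceptable_universal[OF acc] by blast
  obtain q rq where B: "B = dom q" and Q: "\<And>y v. eval rq [y] v \<longleftrightarrow> q y = Some v"
    using \<open>ce B\<close> unfolding ce_def partial_computable_def by blast
  define g where "g u x = (if x \<in> target \<psi> B u then Some (0::nat) else None)" for u x
  have "eval (target_semidecider rU rq) [u, x] y \<longleftrightarrow> g u x = Some y" for u x y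
    unfolding g_def B by (simp add: eval_target_semidecider[OF U Q])
  then obtain u0 a where seq: "\<forall>j. \<psi> u0 j = Some (a j)"
    and shifted: "\<forall>j x. \<psi> (a j) x = map_option (\<lambda>v. v + j) (g u0 x)"
    using shifted_copies_fixed_point[OF acc] by blast
  have members: "\<psi> (a j) x = (if x \<in> target \<psi> B u0 then Some j else None)" for j x
    by (simp add: shifted g_def)
  note target = target_of_fixed_point[OF seq[rule_format] members]
  have "self_constructing \<psi> (insert (a 0) (a ` Suc ` B))"
    using members target(2)
    by (intro self_constructing_if_uniform_indices[OF acc, of a]) auto
  with seq target(1) show ?thesis by blast
qed

section \<open>Self-constructing sets of every finite size\<close>

lemma ce_initial_segment: "ce {..<m}"
proof -
  have "eval (Mn (Cn SUB [Cn S [Proj 1], cst m])) [y] v \<longleftrightarrow> v = 0 \<and> Suc y - m = 0" for y v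
    by (rule eval_Mn_constant) auto
  then have "eval (Mn (Cn SUB [Cn S [Proj 1], cst m])) [y] v \<longleftrightarrow>
      (\<lambda>y. if y < m then Some (0::nat) else None) y = Some v" for y v
    by auto
  then have "partial_computable (\<lambda>y. if y < m then Some (0::nat) else None)"
    unfolding partial_computable_def by blast
  moreover have "{..<m} = dom (\<lambda>y. if y < m then Some (0::nat) else None)"
    by (auto simp: dom_def)
  ultimately show ?thesis unfolding ce_def by blast
qed

theorem finite_self_constructing:
  assumes acc: "acceptable \<psi>" and "n \<ge> 1"
  shows "\<exists>A. self_constructing \<psi> A \<and> finite A \<and> card A = n"
proof -
  obtain u0 a where "inj a" and sc: "self_constructing \<psi> (insert (a 0) (a ` Suc ` {..<n - 1}))"
    using self_constructing_from_ce[OF acc ce_initial_segment] by blast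
  have "a 0 \<notin> a ` Suc ` {..<n - 1}" using \<open>inj a\<close> by (auto dest: injD)
  moreover have "inj_on a (Suc ` {..<n - 1})" using \<open>inj a\<close> by (rule inj_on_subset) simp
  then have "card (a ` Suc ` {..<n - 1}) = n - 1" by (simp add: card_image)
  ultimately have "card (insert (a 0) (a ` Suc ` {..<n - 1})) = n"
    using \<open>n \<ge> 1\<close> by simp
  with sc show ?thesis by blast
qed

section \<open>A creative self-constructing set\<close>

definition halting_set :: "(nat \<Rightarrow> nat \<Rightarrow> nat option) \<Rightarrow> nat set" where
  "halting_set \<psi> = {e. e \<in> W \<psi> e}"

lemma ce_halting_set:
  assumes acc: "acceptable \<psi>"
  shows "ce (halting_set \<psi>)"
proof -
  obtain rU where U: "\<And>e x y. eval rU [e, x] y \<longleftrightarrow> \<psi> e x = Some y"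
    using acceptable_universal[OF acc] by blast
  have "eval (Cn rU [Proj 0, Proj 0]) [e] y \<longleftrightarrow> \<psi> e e = Some y" for e y
    by (auto simp: U)
  then have "partial_computable (\<lambda>e. \<psi> e e)" unfolding partial_computable_def by blast
  moreover have "halting_set \<psi> = dom (\<lambda>e. \<psi> e e)"
    by (auto simp: halting_set_def W_def dom_def)
  ultimately show ?thesis unfolding ce_def by blast
qed

text \<open>Coding the halting set along a computable injective sequence gives a set with productive
  complement: the productive function maps x to a (h x + 1), where \<psi> (h x) = \<psi> x \<circ> a \<circ> Suc.
  If W x \<subseteq> -A, then h x \<notin> K (otherwise a (h x + 1) \<in> A \<inter> W x), hence a (h x + 1) \<notin> A \<union> W x.\<close>
lemma productive_complement_of_coded_halting_set:
  assumes acc: "acceptable \<psi>" and seq: "\<forall>j. \<psi> u0 j = Some (a j)" and "inj a"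
  defines "A \<equiv> insert (a 0) (a ` Suc ` halting_set \<psi>)"
  shows "productive \<psi> (- A)"
proof -
  obtain rU where U: "\<And>e x y. eval rU [e, x] y \<longleftrightarrow> \<psi> e x = Some y"
    using acceptable_universal[OF acc] by blast
  have restrict: "eval (Cn rU [Proj 0, Cn rU [cst u0, Cn S [Proj 1]]]) [x, y] v \<longleftrightarrow>
      \<psi> x (a (Suc y)) = Some v" for x y v
    by (auto simp: U seq)
  obtain h rh where rh: "\<forall>x y. eval rh [x] y \<longleftrightarrow> y = h x"
    and h: "\<forall>x. \<psi> (h x) = (\<lambda>y. \<psi> x (a (Suc y)))"
    using acceptable_smn[OF acc restrict] by blast
  define p where "p x = Some (a (Suc (h x)))" for x
  have "eval (Cn rU [cst u0, Cn S [Cn rh [Proj 0]]]) [x] y \<longleftrightarrow> p x = Some y" for x y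
    by (auto simp: U seq rh p_def)
  then have "partial_computable p" unfolding partial_computable_def by blast
  have coded: "a (Suc k) \<in> A \<longleftrightarrow> k \<in> halting_set \<psi>" for k
    using \<open>inj a\<close> unfolding A_def by (auto dest: injD)
  have "a (Suc (h x)) \<in> - A - W \<psi> x" if "W \<psi> x \<subseteq> - A" for x
  proof -
    have W_h: "a (Suc (h x)) \<in> W \<psi> x \<longleftrightarrow> h x \<in> halting_set \<psi>"
      using h by (simp add: W_def halting_set_def dom_def)
    then have "h x \<notin> halting_set \<psi>" using that coded by blast
    then show ?thesis using W_h coded by blast
  qed
  with \<open>partial_computable p\<close> show ?thesis unfolding productive_def p_def by blast
qed

text \<open>A set with productive complement is not computable: otherwise its complement would be
  some W e, and the productive function would have to find an element of -A - W e = {}.\<close>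
lemma not_computable_if_productive_complement:
  assumes acc: "acceptable \<psi>" and pr: "productive \<psi> (- A)"
  shows "\<not> computable_set A"
proof
  assume "computable_set A"
  then obtain rc where rc: "\<And>x y. eval rc [x] y \<longleftrightarrow> (if x \<in> A then 1 else 0) = y"
    unfolding computable_set_def total_computable_def partial_computable_def by auto
  have "eval (Mn (Cn rc [Proj 1])) [x] k \<longleftrightarrow> k = 0 \<and> (if x \<in> A then 1 else 0) = (0::nat)" for x k
    by (rule eval_Mn_constant) (auto simp: rc)
  then have "eval (Mn (Cn rc [Proj 1])) [x] k \<longleftrightarrow> (if x \<in> A then None else Some 0) = Some k" for x k
    by auto
  from acceptable_index[OF acc this] obtain e where e: "\<psi> e = (\<lambda>x. if x \<in> A then None else Some 0)"
    by blast
  have "W \<psi> e = - A" unfolding W_def e by (auto simp: dom_def)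
  then show False using pr unfolding productive_def by blast
qed

theorem creative_self_constructing:
  assumes acc: "acceptable \<psi>"
  shows "\<exists>A. self_constructing \<psi> A \<and> creative \<psi> A \<and> \<not> computable_set A"
proof -
  obtain u0 a where seq: "\<forall>j. \<psi> u0 j = Some (a j)" and "inj a"
    and sc: "self_constructing \<psi> (insert (a 0) (a ` Suc ` halting_set \<psi>))"
    using self_constructing_from_ce[OF acc ce_halting_set[OF acc]] by blast
  have pr: "productive \<psi> (- insert (a 0) (a ` Suc ` halting_set \<psi>))"
    using productive_complement_of_coded_halting_set[OF acc seq \<open>inj a\<close>] .
  have "creative \<psi> (insert (a 0) (a ` Suc ` halting_set \<psi>))"
    using sc pr unfolding creative_def self_constructing_def by blast
  with sc pr not_computable_if_productive_complement[OF acc] show ?thesis by blast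
qed

theorem mainTheorem7:
  fixes \<psi> :: "nat \<Rightarrow> nat \<Rightarrow> nat option"
  assumes "acceptable \<psi>"
  shows "(\<forall>n::nat. n \<ge> 1 \<longrightarrow> (\<exists>A. self_constructing \<psi> A \<and> finite A \<and> card A = n))
       \<and> (\<exists>A. self_constructing \<psi> A \<and> creative \<psi> A \<and> \<not> computable_set A)"
  using finite_self_constructing[OF assms] creative_self_constructing[OF assms] by blast

end
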